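(* Let $n$ be a positive integer, let $T_d\in\mathbb{R}^{n\times n}$ be a symmetric positive definite matrix (in the application, a $d$-level Toeplitz matrix), and let $D_d\in\mathbb{R}^{n\times n}$ be a diagonal matrix with nonnegative diagonal entries. Consider the real non-symmetric positive definite block linear system $\mathcal{R}_d x=f$ with $$\mathcal{R}_d=\begin{bmatrix} I & T_d-D_d\\ D_d-T_d & I\end{bmatrix}\in\mathbb{R}^{2n\times 2n},$$ and its splitting $\mathcal{R}_d=\mathcal{T}_d+\mathcal{D}_d$ with $$\mathcal{T}_d=\begin{bmatrix} 0 & T_d\\ -T_d & 0\end{bmatrix},\qquad \mathcal{D}_d=\begin{bmatrix} I & -D_d\\ D_d & I\end{bmatrix}.$$ Let $\omega>0$. For an arbitrary initial vector $x^{(0)}\in\mathbb{R}^{2n}$, define the iteration (the TBAN iteration) $$(\omega I+\mathcal{T}_d)x^{(k+\frac12)}=(\omega I-\mathcal{D}_d)x^{(k)}+f,\qquad (\omega I+\mathcal{D}_d)x^{(k+1)}=(\omega I-\mathcal{T}_d)x^{(k+\frac12)}+f,\quad k=0,1,2,\dots$$ Then the sequence $\{x^{(k)}\}_{k\ge0}$ converges to the unique solution of $\mathcal{R}_d x=f$. Moreover, with $$\mathcal{F}_{d,\omega}=\tfrac{1}{2\omega}(\omega I+\mathcal{T}_d)(\omega I+\mathcal{D}_d),\quad \mathcal{G}_{d,\omega}=\tfrac{1}{2\omega}(\omega I-\mathcal{T}_d)(\omega I-\mathcal{D}_d),\quad \mathcal{L}_{d,\omega}=\mathcal{F}_{d,\omega}^{-1}\mathcal{G}_{d,\omega},$$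 the spectral radius of the iteration matrix satisfies $$\rho(\mathcal{L}_{d,\omega})\le \sigma(\omega)<1\quad\text{for all }\omega>0,\qquad \sigma(\omega)=\sqrt{\frac{(\omega-1)^2+\lambda_{\max}^2}{(\omega+1)^2+\lambda_{\max}^2}},$$ where $\lambda_{\max}$ is the maximum diagonal entry of $D_d$.
   Context: This arises from writing a complex linear system $(D_d-T_d+\imath I)\mathbf{u}=\mathbf{b}$ with $\mathbf{u}=y+\imath z$, $\mathbf{b}=p+\imath q$ in real form, $x=[z;y]$, $f=[-p;q]$. Here $I$ denotes identity matrices of the appropriate size and $\rho(\cdot)$ is the spectral radius. *)

theory Defs
  imports "HOL-Analysis.Analysis"
begin

text \<open>2x2 block matrix with blocks indexed by the sum type 'n + 'n
  (so the result is a 2n x 2n matrix when 'n has n elements).\<close>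
definition block2 ::
  "real^'n^'n \<Rightarrow> real^'n^'n \<Rightarrow> real^'n^'n \<Rightarrow> real^'n^'n \<Rightarrow> real^('n+'n)^('n+'n)" where
  "block2 A B C D = (\<chi> i j. (case i of
      Inl a \<Rightarrow> (case j of Inl b \<Rightarrow> A$a$b | Inr b \<Rightarrow> B$a$b)
    | Inr a \<Rightarrow> (case j of Inl b \<Rightarrow> C$a$b | Inr b \<Rightarrow> D$a$b)))"

definition eigenvalues :: "real^'m^'m \<Rightarrow> complex set" where
  "eigenvalues A = {l. \<exists>v::complex^'m. v \<noteq> 0 \<and>
       (\<chi> i j. complex_of_real (A$i$j)) *v v = l *s v}"

definition spectral_radius :: "real^'m^'m \<Rightarrow> real" where
  "spectral_radius A = Max (cmod ` eigenvalues A)"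


definition bigR :: "real^'n^'n \<Rightarrow> real^'n^'n \<Rightarrow> real^('n+'n)^('n+'n)" where
  "bigR T D = block2 (mat 1) (T - D) (D - T) (mat 1)"
definition bigT :: "real^'n^'n \<Rightarrow> real^('n+'n)^('n+'n)" where
  "bigT T = block2 0 T (- T) 0"
definition bigD :: "real^'n^'n \<Rightarrow> real^('n+'n)^('n+'n)" where
  "bigD D = block2 (mat 1) (- D) D (mat 1)"
definition bigF :: "real \<Rightarrow> real^'n^'n \<Rightarrow> real^'n^'n \<Rightarrow> real^('n+'n)^('n+'n)" where
  "bigF \<omega> T D = (1 / (2 * \<omega>)) *\<^sub>R ((\<omega> *\<^sub>R mat 1 + bigT T) ** (\<omega> *\<^sub>R mat 1 + bigD D))"
definition bigG :: "real \<Rightarrow> real^'n^'n \<Rightarrow> real^'n^'n \<Rightarrow> real^('n+'n)^('n+'n)" where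
  "bigG \<omega> T D = (1 / (2 * \<omega>)) *\<^sub>R ((\<omega> *\<^sub>R mat 1 - bigT T) ** (\<omega> *\<^sub>R mat 1 - bigD D))"
definition bigL :: "real \<Rightarrow> real^'n^'n \<Rightarrow> real^'n^'n \<Rightarrow> real^('n+'n)^('n+'n)" where
  "bigL \<omega> T D = matrix_inv (bigF \<omega> T D) ** bigG \<omega> T D"

end

theory Submission
  imports Defs "Jordan_Normal_Form.Char_Poly"
begin

(* Both halves of the splitting are shifts of skew-symmetric matrices: bigT T is skew because T
   is symmetric, and bigD D = I + K with K = [0, -D; D, 0] skew and |K x| <= lmax |x|. For skew K
   one has |(c I + K) x|^2 = c^2 |x|^2 + |K x|^2 = |(c I - K) x|^2, so the Cayley transform
   (w I - bigT T)(w I + bigT T)^-1 is orthogonal, while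
   |(w I - bigD D) x| <= sigma(w) |(w I + bigD D) x|, where sigma(w) = contraction_factor w lmax.
   Hence the error of the iteration contracts by the factor sigma(w) < 1 in the norm
   x |-> |(w I + bigD D) x|. The same estimate bounds every complex eigenvalue of the iteration
   matrix, after splitting an eigenvector into its real and imaginary parts. *)

hide_const (open) Matrix.mat
no_notation Matrix.scalar_prod (infix "\<bullet>" 70)
no_notation Matrix.vec_index (infixl "$" 100)

section \<open>Eigenvalues and the spectral radius\<close>

lemma eigenvalues_eq_eigenvalue_mat:
  fixes A :: "real^'m^'m"
  assumes h: "bij_betw h {0..<CARD('m)} (UNIV :: 'm set)"
  shows "eigenvalues A =
    {l. eigenvalue (Matrix.mat CARD('m) CARD('m) (\<lambda>(i, j). complex_of_real (A $ h i $ h j))) l}"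
proof -
  define n where "n = CARD('m)"
  have h': "bij_betw h {0..<n} UNIV" using h unfolding n_def .
  define g where "g = inv_into {0..<n} h"
  have hg: "h (g k) = k" for k
    unfolding g_def by (rule bij_betw_inv_into_right[OF h']) simp
  have g_lt: "g k < n" for k
    using bij_betw_inv_into[OF h'] unfolding g_def bij_betw_def by auto
  define Ac :: "complex^'m^'m" where "Ac = (\<chi> i j. complex_of_real (A$i$j))"
  define B where "B = Matrix.mat n n (\<lambda>(i, j). Ac $ h i $ h j)"
  define to_vec where "to_vec v = Matrix.vec n (\<lambda>i. v $ h i)" for v :: "complex^'m"
  have B: "B \<in> carrier_mat n n" and to_vec: "to_vec v \<in> carrier_vec n" for v
    unfolding B_def to_vec_def by simp_all
  have to_vec_mult: "to_vec (Ac *v v) = B *\<^sub>v to_vec v" for v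
  proof (rule eq_vecI)
    fix i assume "i < dim_vec (B *\<^sub>v to_vec v)"
    then have i: "i < n" using B by simp
    have "(\<Sum>j\<in>{0..<n}. Ac $ h i $ h j * v $ h j) = (\<Sum>k\<in>UNIV. Ac $ h i $ k * v $ k)"
      by (rule sum.reindex_bij_betw[OF h'])
    then show "vec_index (to_vec (Ac *v v)) i = vec_index (B *\<^sub>v to_vec v) i"
      using i by (simp add: to_vec_def B_def matrix_vector_mult_def scalar_prod_def)
  qed (simp add: to_vec_def B_def)
  have to_vec_smult: "to_vec (l *s v) = l \<cdot>\<^sub>v to_vec v" for l v
    by (rule eq_vecI) (simp_all add: to_vec_def)
  have to_vec_inj: "v = w" if "to_vec v = to_vec w" for v w
  proof -
    have "vec_index (to_vec v) (g k) = vec_index (to_vec w) (g k)" for k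
      using that by simp
    then show "v = w" using g_lt hg by (simp add: to_vec_def Finite_Cartesian_Product.vec_eq_iff)
  qed
  have to_vec_onto: "to_vec (\<chi> k. vec_index w (g k)) = w" if "w \<in> carrier_vec n" for w
  proof (rule eq_vecI)
    fix i assume "i < dim_vec w"
    then have "g (h i) = i" using that h' unfolding g_def bij_betw_def by simp
    then show "vec_index (to_vec (\<chi> k. vec_index w (g k))) i = vec_index w i"
      using \<open>i < dim_vec w\<close> that by (simp add: to_vec_def)
  qed (use that in \<open>simp add: to_vec_def\<close>)
  have to_vec_zero: "to_vec 0 = 0\<^sub>v n"
    by (simp add: to_vec_def zero_vec_def)
  have "l \<in> eigenvalues A \<longleftrightarrow> eigenvalue B l" for l
  proof
    assume "l \<in> eigenvalues A"
    then obtain v where v: "v \<noteq> 0" "Ac *v v = l *s v"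
      unfolding eigenvalues_def Ac_def by auto
    have "to_vec v \<noteq> 0\<^sub>v n" using v(1) to_vec_inj to_vec_zero by metis
    moreover have "B *\<^sub>v to_vec v = l \<cdot>\<^sub>v to_vec v"
      using v(2) to_vec_mult to_vec_smult by metis
    ultimately show "eigenvalue B l"
      unfolding eigenvalue_def eigenvector_def using B to_vec by blast
  next
    assume "eigenvalue B l"
    then obtain w where w: "w \<in> carrier_vec n" "w \<noteq> 0\<^sub>v n" "B *\<^sub>v w = l \<cdot>\<^sub>v w"
      unfolding eigenvalue_def eigenvector_def using B by auto
    define v where "v = (\<chi> k. vec_index w (g k))"
    have w_eq: "w = to_vec v" unfolding v_def using to_vec_onto[OF w(1)] by simp
    have "v \<noteq> 0" using w(2) to_vec_zero w_eq by auto
    moreover have "Ac *v v = l *s v"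
      using w(3) to_vec_mult to_vec_smult to_vec_inj unfolding w_eq by metis
    ultimately show "l \<in> eigenvalues A"
      unfolding eigenvalues_def Ac_def by auto
  qed
  then show ?thesis unfolding B_def Ac_def n_def by auto
qed

lemma eigenvalues_finite_nonempty:
  fixes A :: "real^'m^'m"
  shows "finite (eigenvalues A)" and "eigenvalues A \<noteq> {}"
proof -
  obtain h where h: "bij_betw h {0..<CARD('m)} (UNIV :: 'm set)"
    using ex_bij_betw_nat_finite[of "UNIV :: 'm set"] by auto
  define B where "B = Matrix.mat CARD('m) CARD('m) (\<lambda>(i, j). complex_of_real (A $ h i $ h j))"
  have B: "B \<in> carrier_mat CARD('m) CARD('m)"
    unfolding B_def by simp
  have roots: "eigenvalues A = {l. poly (char_poly B) l = 0}"
    unfolding eigenvalues_eq_eigenvalue_mat[OF h] B_def[symmetric]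
    using eigenvalue_root_char_poly[OF B] by blast
  from degree_monic_char_poly[OF B] have deg: "degree (char_poly B) = CARD('m)"
    and lead: "coeff (char_poly B) CARD('m) = 1" by auto
  from lead have "char_poly B \<noteq> 0" by auto
  from poly_roots_finite[OF this] show "finite (eigenvalues A)"
    unfolding roots .
  from deg have "\<not> constant (poly (char_poly B))"
    by (simp add: constant_degree)
  from fundamental_theorem_of_algebra[OF this] show "eigenvalues A \<noteq> {}"
    unfolding roots by blast
qed

lemma spectral_radius_le:
  assumes "\<And>l. l \<in> eigenvalues A \<Longrightarrow> cmod l \<le> s"
  shows "spectral_radius A \<le> s"
  unfolding spectral_radius_def
  using eigenvalues_finite_nonempty[of A] assms by (intro Max.boundedI) auto

lemma complexified_eigenvector_Re_Im:
  fixes M :: "real^'n^'n"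
  assumes "(\<chi> i j. complex_of_real (M$i$j)) *v v = l *s v"
  shows "M *v (\<chi> i. Re (v$i)) = Re l *\<^sub>R (\<chi> i. Re (v$i)) - Im l *\<^sub>R (\<chi> i. Im (v$i))"
    and "M *v (\<chi> i. Im (v$i)) = Im l *\<^sub>R (\<chi> i. Re (v$i)) + Re l *\<^sub>R (\<chi> i. Im (v$i))"
proof -
  have row: "(\<Sum>j\<in>UNIV. complex_of_real (M$i$j) * v$j) = l * v$i" for i
    using assms by (simp add: Finite_Cartesian_Product.vec_eq_iff matrix_vector_mult_def)
  show "M *v (\<chi> i. Re (v$i)) = Re l *\<^sub>R (\<chi> i. Re (v$i)) - Im l *\<^sub>R (\<chi> i. Im (v$i))"
    using arg_cong[OF row, of Re]
    by (simp add: Finite_Cartesian_Product.vec_eq_iff matrix_vector_mult_def Re_sum)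
  show "M *v (\<chi> i. Im (v$i)) = Im l *\<^sub>R (\<chi> i. Re (v$i)) + Re l *\<^sub>R (\<chi> i. Im (v$i))"
    using arg_cong[OF row, of Im]
    by (simp add: Finite_Cartesian_Product.vec_eq_iff matrix_vector_mult_def Im_sum algebra_simps)
qed

lemma norm_rotation_pair_squared:
  fixes x y :: "'a::real_inner"
  shows "(norm (p *\<^sub>R x - q *\<^sub>R y))\<^sup>2 + (norm (q *\<^sub>R x + p *\<^sub>R y))\<^sup>2
    = (p\<^sup>2 + q\<^sup>2) * ((norm x)\<^sup>2 + (norm y)\<^sup>2)"
  unfolding power2_norm_eq_inner
  by (simp add: inner_diff_left inner_diff_right inner_add_left inner_add_right
      inner_commute[of y x] power2_eq_square ring_distribs)

lemma cmod_eigenvalue_le_weighted_contraction: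
  fixes M W :: "real^'n^'n"
  assumes W: "invertible W" and s: "0 \<le> s"
    and contraction: "\<And>y. norm (W *v (M *v y)) \<le> s * norm (W *v y)"
    and l: "l \<in> eigenvalues M"
  shows "cmod l \<le> s"
proof -
  from l obtain v where "v \<noteq> 0" and v: "(\<chi> i j. complex_of_real (M$i$j)) *v v = l *s v"
    unfolding eigenvalues_def by auto
  define a where "a = (\<chi> i. Re (v$i))"
  define b where "b = (\<chi> i. Im (v$i))"
  have "a \<noteq> 0 \<or> b \<noteq> 0"
  proof (rule ccontr)
    assume "\<not> (a \<noteq> 0 \<or> b \<noteq> 0)"
    then have "v $ i = 0" for i
      by (auto simp: a_def b_def Finite_Cartesian_Product.vec_eq_iff complex_eq_iff)
    with \<open>v \<noteq> 0\<close> show False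
      by (simp add: Finite_Cartesian_Product.vec_eq_iff)
  qed
  moreover have "y = 0" if "W *v y = 0" for y
    using inj_matrix_vector_mult[OF W] that by (metis injD matrix_vector_mult_0_right)
  ultimately have "W *v a \<noteq> 0 \<or> W *v b \<noteq> 0"
    by blast
  then have "0 < (norm (W *v a))\<^sup>2 \<or> 0 < (norm (W *v b))\<^sup>2"
    by simp
  then have pos: "0 < (norm (W *v a))\<^sup>2 + (norm (W *v b))\<^sup>2"
    by (meson add_nonneg_pos add_pos_nonneg zero_le_power2)
  (* M acts on span {a, b} as multiplication by l, i.e. as a rotation scaled by cmod l. *)
  have "M *v a = Re l *\<^sub>R a - Im l *\<^sub>R b" and "M *v b = Im l *\<^sub>R a + Re l *\<^sub>R b"
    unfolding a_def b_def by (fact complexified_eigenvector_Re_Im[OF v])+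
  then have "W *v (M *v a) = Re l *\<^sub>R (W *v a) - Im l *\<^sub>R (W *v b)"
    and "W *v (M *v b) = Im l *\<^sub>R (W *v a) + Re l *\<^sub>R (W *v b)"
    by (simp_all add: matrix_vector_mult_diff_distrib matrix_vector_right_distrib
        matrix_vector_mult_scaleR)
  then have "(cmod l)\<^sup>2 * ((norm (W *v a))\<^sup>2 + (norm (W *v b))\<^sup>2)
      = (norm (W *v (M *v a)))\<^sup>2 + (norm (W *v (M *v b)))\<^sup>2"
    by (simp only: norm_rotation_pair_squared cmod_power2)
  also have "\<dots> \<le> s\<^sup>2 * ((norm (W *v a))\<^sup>2 + (norm (W *v b))\<^sup>2)"
  proof -
    have "(norm (W *v (M *v y)))\<^sup>2 \<le> s\<^sup>2 * (norm (W *v y))\<^sup>2" for y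
      using power_mono[OF contraction[of y] norm_ge_zero] by (simp add: power_mult_distrib)
    from add_mono[OF this[of a] this[of b]] show ?thesis
      by (simp add: distrib_left)
  qed
  finally have "(cmod l)\<^sup>2 \<le> s\<^sup>2"
    using pos by (rule mult_right_le_imp_le)
  then show ?thesis
    using s by (rule power2_le_imp_le)
qed

lemma matrix_mul_matrix_inv:
  fixes A :: "'a::semiring_1^'n^'n"
  assumes "invertible A"
  shows "A ** matrix_inv A = mat 1"
  using assms unfolding invertible_def matrix_inv_def by (metis (mono_tags, lifting) someI_ex)

lemma invertible_ex1_solution:
  fixes A :: "real^'n^'n"
  assumes "invertible A"
  shows "\<exists>!x. A *v x = f"
proof (rule ex1I)
  show sol: "A *v (matrix_inv A *v f) = f"
    by (simp add: matrix_vector_mul_assoc matrix_mul_matrix_inv[OF assms])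
  fix y assume "A *v y = f"
  with sol have "A *v y = A *v (matrix_inv A *v f)"
    by simp
  then show "y = matrix_inv A *v f"
    by (rule injD[OF inj_matrix_vector_mult[OF assms]])
qed

lemma transpose_zero [simp]: "transpose 0 = 0"
  by (simp add: transpose_def Finite_Cartesian_Product.vec_eq_iff)

lemma transpose_add: "transpose (A + B) = transpose A + transpose B"
  by (simp add: transpose_def Finite_Cartesian_Product.vec_eq_iff)

lemma transpose_uminus: "transpose (- A) = - transpose A"
  by (simp add: transpose_def Finite_Cartesian_Product.vec_eq_iff)

lemma transpose_diagonal:
  assumes "\<And>i j. i \<noteq> j \<Longrightarrow> D$i$j = 0"
  shows "transpose D = D"
  by (simp add: transpose_def Finite_Cartesian_Product.vec_eq_iff) (metis assms)

lemma scaleR_mat_1_mult_vec [simp]: "(c *\<^sub>R mat 1) *v x = c *\<^sub>R (x :: real^'n)"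
  by (simp add: scaleR_matrix_vector_assoc[symmetric])

lemma sum_UNIV_sum_type:
  "sum g (UNIV :: ('a::finite + 'b::finite) set) = (\<Sum>a\<in>UNIV. g (Inl a)) + (\<Sum>b\<in>UNIV. g (Inr b))"
  using sum.Plus[of "UNIV :: 'a set" "UNIV :: 'b set" g] by simp

lemma norm_sum_type_squared:
  fixes x :: "real^('a::finite + 'b::finite)"
  shows "(norm x)\<^sup>2 = (norm (\<chi> i. x $ Inl i))\<^sup>2 + (norm (\<chi> i. x $ Inr i))\<^sup>2"
  unfolding power2_norm_eq_inner inner_vec_def by (simp add: sum_UNIV_sum_type)

lemma norm_diagonal_matrix_vector_le:
  fixes D :: "real^'n^'n"
  assumes diag: "\<And>i j. i \<noteq> j \<Longrightarrow> D$i$j = 0" and b: "\<And>i. \<bar>D$i$i\<bar> \<le> b"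
  shows "norm (D *v y) \<le> b * norm y"
proof -
  have b_nonneg: "0 \<le> b"
    using abs_ge_zero b order_trans by blast
  have "(D *v y) $ i = D$i$i * y$i" for i
  proof -
    have "(D *v y) $ i = (\<Sum>j\<in>UNIV. D$i$j * y$j)"
      by (simp add: matrix_vector_mult_def)
    also have "\<dots> = (\<Sum>j\<in>UNIV. if j = i then D$i$i * y$i else 0)"
      by (rule sum.cong) (auto simp: diag)
    finally show ?thesis by simp
  qed
  then have "(norm (D *v y))\<^sup>2 = (\<Sum>i\<in>UNIV. (D$i$i)\<^sup>2 * (y$i)\<^sup>2)"
    unfolding power2_norm_eq_inner inner_vec_def by (simp add: power2_eq_square mult_ac)
  also have "\<dots> \<le> (\<Sum>i\<in>UNIV. b\<^sup>2 * (y$i)\<^sup>2)"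
    using power_mono[OF b abs_ge_zero, of _ 2] by (intro sum_mono mult_right_mono) simp_all
  also have "\<dots> = (b * norm y)\<^sup>2"
    unfolding power_mult_distrib power2_norm_eq_inner inner_vec_def
    by (simp add: sum_distrib_left power2_eq_square)
  finally show ?thesis
    by (rule power2_le_imp_le) (simp add: b_nonneg)
qed

section \<open>Shifted skew-symmetric matrices\<close>

lemma shifted_matrix_vector_mult:
  fixes K :: "real^'n^'n"
  shows "(c *\<^sub>R mat 1 + K) *v x = c *\<^sub>R x + K *v x"
    and "(c *\<^sub>R mat 1 - K) *v x = c *\<^sub>R x - K *v x"
  by (simp_all add: matrix_vector_mult_add_rdistrib matrix_vector_mult_diff_rdistrib)

lemma inner_skew_self:
  fixes K :: "real^'n^'n"
  assumes "transpose K = - K"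
  shows "x \<bullet> (K *v x) = 0"
proof -
  have "x \<bullet> (K *v x) = (transpose K *v x) \<bullet> x"
    by (simp add: dot_lmul_matrix)
  also have "\<dots> = - (x \<bullet> (K *v x))"
    using matrix_vector_mult_diff_rdistrib[of 0 K x] by (simp add: assms inner_commute)
  finally show ?thesis by simp
qed

lemma norm_shifted_skew_squared:
  fixes K :: "real^'n^'n"
  assumes "transpose K = - K"
  shows "(norm ((c *\<^sub>R mat 1 + K) *v x))\<^sup>2 = c\<^sup>2 * (norm x)\<^sup>2 + (norm (K *v x))\<^sup>2"
    and "(norm ((c *\<^sub>R mat 1 - K) *v x))\<^sup>2 = c\<^sup>2 * (norm x)\<^sup>2 + (norm (K *v x))\<^sup>2"
proof -
  have "x \<bullet> (K *v x) = 0" and "(K *v x) \<bullet> x = 0"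
    using inner_skew_self[OF assms, of x] by (simp_all add: inner_commute[of "K *v x" x])
  then show "(norm ((c *\<^sub>R mat 1 + K) *v x))\<^sup>2 = c\<^sup>2 * (norm x)\<^sup>2 + (norm (K *v x))\<^sup>2"
    and "(norm ((c *\<^sub>R mat 1 - K) *v x))\<^sup>2 = c\<^sup>2 * (norm x)\<^sup>2 + (norm (K *v x))\<^sup>2"
    unfolding power2_norm_eq_inner shifted_matrix_vector_mult
    by (simp_all add: inner_add_left inner_add_right inner_diff_left inner_diff_right power2_eq_square)
qed

lemma invertible_shifted_skew:
  fixes K :: "real^'n^'n"
  assumes "transpose K = - K" and "c \<noteq> 0"
  shows "invertible (c *\<^sub>R mat 1 + K)"
proof -
  have "x = 0" if "(c *\<^sub>R mat 1 + K) *v x = 0" for x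
  proof -
    have "c\<^sup>2 * (norm x)\<^sup>2 \<le> (norm ((c *\<^sub>R mat 1 + K) *v x))\<^sup>2"
      unfolding norm_shifted_skew_squared[OF assms(1)] by simp
    with that assms(2) show "x = 0" by (auto simp: mult_le_0_iff)
  qed
  then show ?thesis
    using matrix_left_invertible_ker invertible_left_inverse by blast
qed

(* The Cayley transform (c I - K)(c I + K)^-1 of a skew-symmetric K is orthogonal. *)
lemma cayley_norm_eq:
  fixes K :: "real^'n^'n"
  assumes "transpose K = - K" and "c \<noteq> 0"
    and "(c *\<^sub>R mat 1 + K) *v z = (c *\<^sub>R mat 1 - K) *v u"
  shows "norm z = norm u"
proof -
  have "c *\<^sub>R (z - u) = - (K *v (z + u))"
    using assms(3) by (simp add: shifted_matrix_vector_mult algebra_simps)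
  then have "c * ((z - u) \<bullet> (z + u)) = - ((K *v (z + u)) \<bullet> (z + u))"
    by (metis inner_minus_left inner_scaleR_left)
  then have "(z - u) \<bullet> (z + u) = 0"
    using inner_skew_self[OF assms(1), of "z + u"] assms(2) by (simp add: inner_commute)
  then have "(norm z)\<^sup>2 = (norm u)\<^sup>2"
    unfolding power2_norm_eq_inner
    by (simp add: inner_diff_left inner_add_right inner_commute[of u z])
  then show ?thesis by simp
qed

lemma shifted_matrices_commute:
  fixes K :: "real^'n^'n"
  shows "(c *\<^sub>R mat 1 + K) *v ((c *\<^sub>R mat 1 - K) *v x) = (c *\<^sub>R mat 1 - K) *v ((c *\<^sub>R mat 1 + K) *v x)"
  by (simp add: shifted_matrix_vector_mult matrix_vector_mult_diff_distrib matrix_vector_right_distrib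
      matrix_vector_mult_scaleR algebra_simps)

definition contraction_factor :: "real \<Rightarrow> real \<Rightarrow> real" where
  "contraction_factor \<omega> b = sqrt (((\<omega> - 1)\<^sup>2 + b\<^sup>2) / ((\<omega> + 1)\<^sup>2 + b\<^sup>2))"

lemma contraction_factor_nonneg: "0 \<le> contraction_factor \<omega> b"
  by (simp add: contraction_factor_def)

lemma contraction_factor_less_one:
  assumes "\<omega> > 0"
  shows "contraction_factor \<omega> b < 1"
proof -
  have "(\<omega> - 1)\<^sup>2 + b\<^sup>2 < (\<omega> + 1)\<^sup>2 + b\<^sup>2"
    using assms by (simp add: power2_eq_square algebra_simps)
  moreover have "0 < (\<omega> + 1)\<^sup>2 + b\<^sup>2"
    using assms by (simp add: add_pos_nonneg)
  ultimately show ?thesis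
    by (simp add: contraction_factor_def)
qed

lemma identity_plus_skew_shifts:
  fixes K :: "real^'n^'n"
  shows "\<omega> *\<^sub>R mat 1 + (mat 1 + K) = (\<omega> + 1) *\<^sub>R mat 1 + K"
    and "\<omega> *\<^sub>R mat 1 - (mat 1 + K) = (\<omega> - 1) *\<^sub>R mat 1 - K"
  by (simp_all add: algebra_simps)

lemma identity_plus_skew_contraction:
  fixes K :: "real^'n^'n"
  assumes K: "transpose K = - K" and K_bound: "\<And>y. norm (K *v y) \<le> b * norm y" and \<omega>: "\<omega> > 0"
  shows "norm ((\<omega> *\<^sub>R mat 1 - (mat 1 + K)) *v x)
    \<le> contraction_factor \<omega> b * norm ((\<omega> *\<^sub>R mat 1 + (mat 1 + K)) *v x)"
proof -
  define a where "a = (norm x)\<^sup>2"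
  define k where "k = (norm (K *v x))\<^sup>2"
  have "k \<le> b\<^sup>2 * a"
    using power_mono[OF K_bound[of x] norm_ge_zero] by (simp add: a_def k_def power_mult_distrib)
  then have "0 \<le> 4 * \<omega> * (b\<^sup>2 * a - k)"
    using \<omega> by simp
  moreover have "((\<omega> - 1)\<^sup>2 + b\<^sup>2) * ((\<omega> + 1)\<^sup>2 * a + k)
      = ((\<omega> + 1)\<^sup>2 + b\<^sup>2) * ((\<omega> - 1)\<^sup>2 * a + k) + 4 * \<omega> * (b\<^sup>2 * a - k)"
    by (simp add: power2_eq_square algebra_simps)
  moreover have "0 < (\<omega> + 1)\<^sup>2 + b\<^sup>2"
    using \<omega> by (simp add: add_pos_nonneg)
  ultimately have "(\<omega> - 1)\<^sup>2 * a + k \<le> (contraction_factor \<omega> b)\<^sup>2 * ((\<omega> + 1)\<^sup>2 * a + k)"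
    by (simp add: contraction_factor_def field_simps)
  then have "(norm ((\<omega> *\<^sub>R mat 1 - (mat 1 + K)) *v x))\<^sup>2
      \<le> (contraction_factor \<omega> b * norm ((\<omega> *\<^sub>R mat 1 + (mat 1 + K)) *v x))\<^sup>2"
    unfolding identity_plus_skew_shifts power_mult_distrib norm_shifted_skew_squared[OF K] a_def k_def .
  then show ?thesis
    by (rule power2_le_imp_le) (simp add: contraction_factor_nonneg)
qed

section \<open>Alternating direction iterations with a skew-symmetric half\<close>

lemma adi_step_contraction:
  fixes H S :: "real^'n^'n"
  assumes H: "transpose H = - H" and \<omega>: "\<omega> \<noteq> 0"
    and S: "\<And>e. norm ((\<omega> *\<^sub>R mat 1 - S) *v e) \<le> s * norm ((\<omega> *\<^sub>R mat 1 + S) *v e)"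
    and step: "(\<omega> *\<^sub>R mat 1 + H) *v ((\<omega> *\<^sub>R mat 1 + S) *v z)
      = (\<omega> *\<^sub>R mat 1 - H) *v ((\<omega> *\<^sub>R mat 1 - S) *v y)"
  shows "norm ((\<omega> *\<^sub>R mat 1 + S) *v z) \<le> s * norm ((\<omega> *\<^sub>R mat 1 + S) *v y)"
  using cayley_norm_eq[OF H \<omega> step] S[of y] by simp

lemma adi_iteration_tendsto:
  fixes H S :: "real^'n^'n" and x xh :: "nat \<Rightarrow> real^'n"
  assumes H: "transpose H = - H" and \<omega>: "\<omega> \<noteq> 0"
    and S: "\<And>e. norm ((\<omega> *\<^sub>R mat 1 - S) *v e) \<le> s * norm ((\<omega> *\<^sub>R mat 1 + S) *v e)"
    and s: "0 \<le> s" "s < 1" and inv_S: "invertible (\<omega> *\<^sub>R mat 1 + S)"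
    and sol: "(H + S) *v u = f"
    and half: "\<And>k. (\<omega> *\<^sub>R mat 1 + H) *v xh k = (\<omega> *\<^sub>R mat 1 - S) *v x k + f"
    and full: "\<And>k. (\<omega> *\<^sub>R mat 1 + S) *v x (Suc k) = (\<omega> *\<^sub>R mat 1 - H) *v xh k + f"
  shows "x \<longlonglongrightarrow> u"
proof -
  define e where "e k = x k - u" for k
  define g where "g k = (\<omega> *\<^sub>R mat 1 + S) *v e k" for k
  have f: "f = H *v u + S *v u"
    using sol by (simp add: matrix_vector_mult_add_rdistrib)
  have fixed_half: "(\<omega> *\<^sub>R mat 1 + H) *v u = (\<omega> *\<^sub>R mat 1 - S) *v u + f"
   and fixed_full: "(\<omega> *\<^sub>R mat 1 + S) *v u = (\<omega> *\<^sub>R mat 1 - H) *v u + f"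
    unfolding f shifted_matrix_vector_mult by (simp_all add: algebra_simps)
  (* The errors follow the recursion of the iteration matrix, as w I + H and w I - H commute. *)
  have "(\<omega> *\<^sub>R mat 1 + H) *v ((\<omega> *\<^sub>R mat 1 + S) *v e (Suc k))
      = (\<omega> *\<^sub>R mat 1 - H) *v ((\<omega> *\<^sub>R mat 1 - S) *v e k)" for k
  proof -
    have full_err: "(\<omega> *\<^sub>R mat 1 + S) *v e (Suc k) = (\<omega> *\<^sub>R mat 1 - H) *v (xh k - u)"
      using full[of k] fixed_full by (simp add: e_def matrix_vector_mult_diff_distrib)
    have half_err: "(\<omega> *\<^sub>R mat 1 + H) *v (xh k - u) = (\<omega> *\<^sub>R mat 1 - S) *v e k"
      using half[of k] fixed_half by (simp add: e_def matrix_vector_mult_diff_distrib)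
    show ?thesis
      unfolding full_err shifted_matrices_commute half_err ..
  qed
  then have step: "norm (g (Suc k)) \<le> s * norm (g k)" for k
    unfolding g_def by (rule adi_step_contraction[OF H \<omega> S])
  have bound: "norm (g k) \<le> s ^ k * norm (g 0)" for k
  proof (induction k)
    case (Suc k)
    then show ?case
      using step[of k] mult_left_mono[OF Suc s(1)] by (simp add: mult.assoc)
  qed simp
  have "(\<lambda>k. s ^ k * norm (g 0)) \<longlonglongrightarrow> 0"
    using s by (intro tendsto_mult_left_zero LIMSEQ_power_zero) simp
  then have "g \<longlonglongrightarrow> 0"
    by (rule Lim_null_comparison[OF always_eventually, OF allI, OF bound])
  obtain P where P: "P ** (\<omega> *\<^sub>R mat 1 + S) = mat 1"
    using inv_S unfolding invertible_def by blast
  have "(\<lambda>k. P *v g k) \<longlonglongrightarrow> P *v 0"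
    by (rule bounded_linear.tendsto[OF matrix_vector_mul_bounded_linear \<open>g \<longlonglongrightarrow> 0\<close>])
  then have "e \<longlonglongrightarrow> 0"
    by (simp add: g_def matrix_vector_mul_assoc P)
  then have "(\<lambda>k. e k + u) \<longlonglongrightarrow> 0 + u"
    by (intro tendsto_add tendsto_const)
  then show ?thesis
    by (simp add: e_def)
qed

lemma adi_eigenvalue_bound:
  fixes H S :: "real^'n^'n"
  assumes H: "transpose H = - H" and \<omega>: "\<omega> \<noteq> 0" and c: "c \<noteq> 0"
    and S: "\<And>e. norm ((\<omega> *\<^sub>R mat 1 - S) *v e) \<le> s * norm ((\<omega> *\<^sub>R mat 1 + S) *v e)"
    and s: "0 \<le> s" and inv_S: "invertible (\<omega> *\<^sub>R mat 1 + S)"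
    and l: "l \<in> eigenvalues (matrix_inv (c *\<^sub>R ((\<omega> *\<^sub>R mat 1 + H) ** (\<omega> *\<^sub>R mat 1 + S)))
                              ** (c *\<^sub>R ((\<omega> *\<^sub>R mat 1 - H) ** (\<omega> *\<^sub>R mat 1 - S))))"
  shows "cmod l \<le> s"
proof -
  define F where "F = c *\<^sub>R ((\<omega> *\<^sub>R mat 1 + H) ** (\<omega> *\<^sub>R mat 1 + S))"
  define G where "G = c *\<^sub>R ((\<omega> *\<^sub>R mat 1 - H) ** (\<omega> *\<^sub>R mat 1 - S))"
  have "invertible F"
    unfolding F_def
    by (intro scalar_invertible c invertible_mult invertible_shifted_skew[OF H \<omega>] inv_S)
  then have "F ** (matrix_inv F ** G) = G"
    by (simp add: matrix_mul_assoc matrix_mul_matrix_inv)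
  then have "F *v ((matrix_inv F ** G) *v y) = G *v y" for y
    by (simp add: matrix_vector_mul_assoc)
  then have "(\<omega> *\<^sub>R mat 1 + H) *v ((\<omega> *\<^sub>R mat 1 + S) *v ((matrix_inv F ** G) *v y))
      = (\<omega> *\<^sub>R mat 1 - H) *v ((\<omega> *\<^sub>R mat 1 - S) *v y)" for y
    using c
    by (simp add: F_def G_def matrix_vector_mul_assoc[symmetric] scaleR_matrix_vector_assoc[symmetric])
  then have "norm ((\<omega> *\<^sub>R mat 1 + S) *v ((matrix_inv F ** G) *v y))
      \<le> s * norm ((\<omega> *\<^sub>R mat 1 + S) *v y)" for y
    by (rule adi_step_contraction[OF H \<omega> S])
  from cmod_eigenvalue_le_weighted_contraction[OF inv_S s this] show ?thesis
    using l unfolding F_def G_def .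
qed

section \<open>Block matrices\<close>

lemma block2_nth [simp]:
  "block2 A B C D $ Inl a $ Inl b = A$a$b"
  "block2 A B C D $ Inl a $ Inr b = B$a$b"
  "block2 A B C D $ Inr a $ Inl b = C$a$b"
  "block2 A B C D $ Inr a $ Inr b = D$a$b"
  by (simp_all add: block2_def)

lemma block2_add:
  "block2 A B C D + block2 A' B' C' D' = block2 (A + A') (B + B') (C + C') (D + D')"
  by (simp add: block2_def Finite_Cartesian_Product.vec_eq_iff split: sum.split)

lemma block2_uminus: "- block2 A B C D = block2 (- A) (- B) (- C) (- D)"
  by (simp add: block2_def Finite_Cartesian_Product.vec_eq_iff split: sum.split)

lemma mat_1_eq_block2: "mat 1 = block2 (mat 1) 0 0 (mat 1)"
  by (simp add: block2_def Finite_Cartesian_Product.vec_eq_iff Finite_Cartesian_Product.mat_def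
      split: sum.split)

lemma transpose_block2:
  "transpose (block2 A B C D) = block2 (transpose A) (transpose C) (transpose B) (transpose D)"
  by (simp add: block2_def transpose_def Finite_Cartesian_Product.vec_eq_iff split: sum.split)

lemma transpose_block2_antidiagonal:
  "transpose (block2 0 B (- transpose B) 0) = - block2 0 B (- transpose B) 0"
  by (simp add: transpose_block2 block2_uminus transpose_uminus)

lemma block2_mult_vec:
  "(block2 A B C D *v x) $ Inl i = (A *v (\<chi> j. x $ Inl j) + B *v (\<chi> j. x $ Inr j)) $ i"
  "(block2 A B C D *v x) $ Inr i = (C *v (\<chi> j. x $ Inl j) + D *v (\<chi> j. x $ Inr j)) $ i"
  by (simp_all add: matrix_vector_mult_def sum_UNIV_sum_type)

lemma norm_block2_antidiagonal_le:
  assumes B: "\<And>y. norm (B *v y) \<le> b * norm y" and C: "\<And>y. norm (C *v y) \<le> b * norm y"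
    and b: "0 \<le> b"
  shows "norm (block2 0 B C 0 *v x) \<le> b * norm x"
proof -
  define l r where "l = (\<chi> i. x $ Inl i)" and "r = (\<chi> i. x $ Inr i)"
  have "(norm (block2 0 B C 0 *v x))\<^sup>2 = (norm (B *v r))\<^sup>2 + (norm (C *v l))\<^sup>2"
    unfolding norm_sum_type_squared[of "block2 0 B C 0 *v x"]
    by (simp add: block2_mult_vec l_def r_def)
  also have "\<dots> \<le> (b * norm r)\<^sup>2 + (b * norm l)\<^sup>2"
    using B[of r] C[of l] by (intro add_mono power_mono) simp_all
  also have "\<dots> = (b * norm x)\<^sup>2"
    unfolding power_mult_distrib norm_sum_type_squared[of x] l_def r_def by (simp add: algebra_simps)
  finally show ?thesis
    by (rule power2_le_imp_le) (simp add: b)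
qed

lemma bigR_eq_bigT_plus_bigD: "bigR T D = bigT T + bigD D"
  by (simp add: bigR_def bigT_def bigD_def block2_add algebra_simps)

lemma bigD_eq_identity_plus_skew: "bigD D = mat 1 + block2 0 (- D) D 0"
proof -
  have "mat 1 + block2 0 (- D) D 0 = block2 (mat 1) (- D) D (mat 1)"
    by (subst mat_1_eq_block2) (simp add: block2_add)
  then show ?thesis
    by (simp add: bigD_def)
qed

lemma transpose_bigT:
  assumes "transpose T = T"
  shows "transpose (bigT T) = - bigT T"
  using transpose_block2_antidiagonal[of T] by (simp add: bigT_def assms)

lemma transpose_bigD_skew_part:
  assumes "\<And>i j. i \<noteq> j \<Longrightarrow> D$i$j = 0"
  shows "transpose (block2 0 (- D) D 0) = - block2 0 (- D) D 0"
  using transpose_block2_antidiagonal[of "- D"]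
  by (simp add: transpose_uminus transpose_diagonal[OF assms])

lemma norm_bigD_skew_part_le:
  fixes D :: "real^'n^'n"
  assumes diag: "\<And>i j. i \<noteq> j \<Longrightarrow> D$i$j = 0" and b: "\<And>i. \<bar>D$i$i\<bar> \<le> b"
  shows "norm (block2 0 (- D) D 0 *v y) \<le> b * norm y"
proof (rule norm_block2_antidiagonal_le)
  show "norm ((- D) *v z) \<le> b * norm z" and "norm (D *v z) \<le> b * norm z" for z
    by (rule norm_diagonal_matrix_vector_le; simp add: diag b)+
  show "0 \<le> b"
    using abs_ge_zero b order_trans by blast
qed

lemma bigD_contraction:
  assumes diag: "\<And>i j. i \<noteq> j \<Longrightarrow> D$i$j = 0" and b: "\<And>i. \<bar>D$i$i\<bar> \<le> b" and "\<omega> > 0"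
  shows "norm ((\<omega> *\<^sub>R mat 1 - bigD D) *v e)
    \<le> contraction_factor \<omega> b * norm ((\<omega> *\<^sub>R mat 1 + bigD D) *v e)"
  unfolding bigD_eq_identity_plus_skew
  by (rule identity_plus_skew_contraction[OF transpose_bigD_skew_part[OF diag]
        norm_bigD_skew_part_le[OF diag b] \<open>\<omega> > 0\<close>])

lemma invertible_shifted_bigD:
  assumes "\<And>i j. i \<noteq> j \<Longrightarrow> D$i$j = 0" and "\<omega> + 1 \<noteq> 0"
  shows "invertible (\<omega> *\<^sub>R mat 1 + bigD D)"
  unfolding bigD_eq_identity_plus_skew identity_plus_skew_shifts
  using assms(2) by (intro invertible_shifted_skew[OF transpose_bigD_skew_part[OF assms(1)]]) simp

lemma invertible_bigR:
  assumes "transpose T = T" and "\<And>i j. i \<noteq> j \<Longrightarrow> D$i$j = 0"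
  shows "invertible (bigR T D)"
proof -
  have "bigR T D = 1 *\<^sub>R mat 1 + (bigT T + block2 0 (- D) D 0)"
    by (simp add: bigR_eq_bigT_plus_bigD bigD_eq_identity_plus_skew algebra_simps)
  also have "invertible \<dots>"
    by (rule invertible_shifted_skew)
      (simp_all add: transpose_add transpose_bigT[OF assms(1)] transpose_bigD_skew_part[OF assms(2)])
  finally show ?thesis .
qed

lemma Max_diagonal_bounds:
  fixes D :: "real^'n^'n"
  assumes "\<And>i. D$i$i \<ge> 0"
  shows "\<bar>D$i$i\<bar> \<le> Max {D$j$j | j. True}" and "0 \<le> Max {D$j$j | j. True}"
proof -
  have "{D$j$j | j. True} = range (\<lambda>j. D$j$j)"
    by auto
  then have "D$i$i \<le> Max {D$j$j | j. True}"
    by (simp add: Max_ge)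
  with assms[of i] show "\<bar>D$i$i\<bar> \<le> Max {D$j$j | j. True}" and "0 \<le> Max {D$j$j | j. True}"
    by simp_all
qed

theorem theorem1:
  fixes T D :: "real^'n^'n" and f :: "real^('n+'n)"
  assumes T_sym: "transpose T = T"
    and T_pd: "\<And>x. x \<noteq> 0 \<Longrightarrow> x \<bullet> (T *v x) > 0"
    and D_diag: "\<And>i j. i \<noteq> j \<Longrightarrow> D$i$j = 0"
    and D_nonneg: "\<And>i. D$i$i \<ge> 0"
  defines "lmax \<equiv> Max {D$i$i | i. True}"
  shows "bigR T D = bigT T + bigD D
    \<and> (\<exists>!xs. bigR T D *v xs = f)
    \<and> (\<forall>\<omega> (x :: nat \<Rightarrow> real^('n+'n)) (xh :: nat \<Rightarrow> real^('n+'n)).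
           \<omega> > 0 \<longrightarrow>
           (\<forall>k. (\<omega> *\<^sub>R mat 1 + bigT T) *v xh k = (\<omega> *\<^sub>R mat 1 - bigD D) *v x k + f) \<longrightarrow>
           (\<forall>k. (\<omega> *\<^sub>R mat 1 + bigD D) *v x (Suc k) = (\<omega> *\<^sub>R mat 1 - bigT T) *v xh k + f) \<longrightarrow>
           x \<longlonglongrightarrow> (THE xs. bigR T D *v xs = f))
    \<and> (\<forall>\<omega>. \<omega> > 0 \<longrightarrow>
           spectral_radius (bigL \<omega> T D) \<le> sqrt (((\<omega> - 1)\<^sup>2 + lmax\<^sup>2) / ((\<omega> + 1)\<^sup>2 + lmax\<^sup>2))
         \<and> sqrt (((\<omega> - 1)\<^sup>2 + lmax\<^sup>2) / ((\<omega> + 1)\<^sup>2 + lmax\<^sup>2)) < 1)"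
proof -
  note lmax = Max_diagonal_bounds[OF D_nonneg, folded lmax_def]
  have T_skew: "transpose (bigT T) = - bigT T"
    by (rule transpose_bigT[OF T_sym])
  have ex1: "\<exists>!xs. bigR T D *v xs = f"
    by (rule invertible_ex1_solution[OF invertible_bigR[OF T_sym D_diag]])
  have sol: "(bigT T + bigD D) *v (THE xs. bigR T D *v xs = f) = f"
    using theI'[OF ex1] by (simp add: bigR_eq_bigT_plus_bigD)
  have contraction: "norm ((\<omega> *\<^sub>R mat 1 - bigD D) *v e)
      \<le> contraction_factor \<omega> lmax * norm ((\<omega> *\<^sub>R mat 1 + bigD D) *v e)" if "\<omega> > 0" for \<omega> e
    by (rule bigD_contraction[OF D_diag lmax(1) that])
  have inv_S: "invertible (\<omega> *\<^sub>R mat 1 + bigD D)" if "\<omega> > 0" for \<omega>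
    using invertible_shifted_bigD[OF D_diag, of \<omega>] that by simp
  show ?thesis
    unfolding contraction_factor_def[symmetric]
  proof (intro conjI allI impI)
    show "bigR T D = bigT T + bigD D" and "\<exists>!xs. bigR T D *v xs = f"
      by (rule bigR_eq_bigT_plus_bigD, rule ex1)
  next
    fix \<omega> :: real and x xh :: "nat \<Rightarrow> real^('n+'n)"
    assume \<omega>: "\<omega> > 0"
      and "\<forall>k. (\<omega> *\<^sub>R mat 1 + bigT T) *v xh k = (\<omega> *\<^sub>R mat 1 - bigD D) *v x k + f"
      and "\<forall>k. (\<omega> *\<^sub>R mat 1 + bigD D) *v x (Suc k) = (\<omega> *\<^sub>R mat 1 - bigT T) *v xh k + f"
    then show "x \<longlonglongrightarrow> (THE xs. bigR T D *v xs = f)"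
      by (intro adi_iteration_tendsto[OF T_skew _ contraction[OF \<omega>] contraction_factor_nonneg
            contraction_factor_less_one[OF \<omega>] inv_S[OF \<omega>] sol]) simp_all
  next
    fix \<omega> :: real
    assume \<omega>: "\<omega> > 0"
    show "spectral_radius (bigL \<omega> T D) \<le> contraction_factor \<omega> lmax"
      unfolding bigL_def bigF_def bigG_def using \<omega>
      by (intro spectral_radius_le adi_eigenvalue_bound[OF T_skew _ _ contraction[OF \<omega>]
            contraction_factor_nonneg inv_S[OF \<omega>]]) simp_all
    show "contraction_factor \<omega> lmax < 1"
      using \<omega> by (rule contraction_factor_less_one)
  qed
qed

end
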